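(* Let $W=(w_{ij})_{i,j=1}^m$ be symmetric with nonnegative entries, and let $\lambda\ge0$, $\sigma\ge0$, $c\in\mathbb{R}^m$. Define $$F(u)=\frac{\lambda}{2}\sum_{i,j=1}^m w_{ij}|u_i-u_j|+\langle u,c\rangle+\sigma\max_iu_i.$$ Then: 1. Duality: $$\min_{u\in\mathbb{R}^m_+}\Big(F(u)+\tfrac12\|u\|_2^2\Big)=-\min_{\substack{\alpha\in\mathbb{R}^{m\times m},\ \|\alpha\|_\infty\le1,\ \alpha_{ij}=-\alpha_{ji}}}\ \min_{v\in S_m}\ \frac12\Big\|P_{\mathbb{R}^m_+}\Big(-c-\tfrac{\lambda}{2}A\alpha-\sigma v\Big)\Big\|_2^2.$$ 2. If $(\alpha^*,v^* )$ attains the minimum on the right, then $u^*=P_{\mathbb{R}^m_+}\big(-c-\frac{\lambda}{2}A\alpha^*-\sigma v^*\big)$ is the unique minimizer of $F(u)+\frac12\|u\|_2^2$ over $\mathbb{R}^m_+$. 3. If $u^*\ne0$, then $u^*/\|u^*\|_2$ minimizes $F$ over $\{u\in\mathbb{R}^m_+:\|u\|_2\le1\}$. If $u^*=0$, then $0$ is such a minimizer.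
   Context: Notation used in the statement: - $(A\alpha)_i:=\sum_j w_{ij}(\alpha_{ij}-\alpha_{ji})$. - $\|\alpha\|_\infty=\max_{i,j}|\alpha_{ij}|$. - $P_{\mathbb{R}^m_+}$ is the Euclidean projection onto the nonnegative orthant (componentwise positive part). - $S_m=\{v\in\mathbb{R}^m: v_i\ge0,\ \sum_iv_i=1\}$ is the probability simplex. *)

theory Defs
  imports "HOL-Analysis.Analysis"
begin

definition Aop :: "real^'m^'m \<Rightarrow> real^'m^'m \<Rightarrow> real^'m" where
  "Aop W \<alpha> = (\<chi> i. \<Sum>j\<in>UNIV. W$i$j * (\<alpha>$i$j - \<alpha>$j$i))"

definition pos_part :: "real^'m \<Rightarrow> real^'m" where
  "pos_part u = (\<chi> i. max (u$i) 0)"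

definition orthant :: "(real^'m) set" where
  "orthant = {u. \<forall>i. 0 \<le> u$i}"

definition simplex_set :: "(real^'m) set" where
  "simplex_set = {v. (\<forall>i. 0 \<le> v$i) \<and> (\<Sum>i\<in>UNIV. v$i) = 1}"

definition dual_feasible :: "(real^'m^'m) set" where
  "dual_feasible = {\<alpha>. (\<forall>i j. \<bar>\<alpha>$i$j\<bar> \<le> 1) \<and> (\<forall>i j. \<alpha>$i$j = - \<alpha>$j$i)}"

definition Fobj :: "real \<Rightarrow> real \<Rightarrow> real^'m^'m \<Rightarrow> real^'m \<Rightarrow> real^'m \<Rightarrow> real" where
  "Fobj lam \<sigma> W c u =
     lam / 2 * (\<Sum>i\<in>UNIV. \<Sum>j\<in>UNIV. W$i$j * \<bar>u$i - u$j\<bar>) + inner u c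
     + \<sigma> * Max (range (%i. u$i))"

definition primal_obj :: "real \<Rightarrow> real \<Rightarrow> real^'m^'m \<Rightarrow> real^'m \<Rightarrow> real^'m \<Rightarrow> real" where
  "primal_obj lam \<sigma> W c u = Fobj lam \<sigma> W c u + 1/2 * (norm u)^2"

definition dual_point :: "real \<Rightarrow> real \<Rightarrow> real^'m^'m \<Rightarrow> real^'m \<Rightarrow> real^'m^'m \<Rightarrow> real^'m \<Rightarrow> real^'m" where
  "dual_point lam \<sigma> W c \<alpha> v = pos_part (- c - (lam/2) *\<^sub>R Aop W \<alpha> - \<sigma> *\<^sub>R v)"

definition dual_obj :: "real \<Rightarrow> real \<Rightarrow> real^'m^'m \<Rightarrow> real^'m \<Rightarrow> real^'m^'m \<Rightarrow> real^'m \<Rightarrow> real" where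
  "dual_obj lam \<sigma> W c \<alpha> v = 1/2 * (norm (dual_point lam \<sigma> W c \<alpha> v))^2"

end

theory Submission
  imports Defs
begin

text \<open>\<open>Fobj\<close> is the support function of the compact convex set \<open>G\<close> (\<open>support_set\<close>) of
  vectors \<open>g = c + (\<lambda>/2) A \<alpha> + \<sigma> v\<close>: \<open>F u = max {\<langle>u, g\<rangle> | g \<in> G}\<close>. For fixed \<open>g\<close> the minimum of
  \<open>\<langle>u, g\<rangle> + \<parallel>u\<parallel>\<^sup>2/2\<close> over the orthant is \<open>-\<parallel>P\<^sub>+(-g)\<parallel>\<^sup>2/2\<close>, attained at \<open>P\<^sub>+(-g)\<close>; this is weak
  duality. At a minimizer \<open>g\<^sub>0\<close> of \<open>\<parallel>P\<^sub>+(-g)\<parallel>\<close> over \<open>G\<close> the first-order condition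
  \<open>\<langle>P\<^sub>+(-g\<^sub>0), g - g\<^sub>0\<rangle> \<le> 0\<close> says that the maximum defining \<open>F(P\<^sub>+(-g\<^sub>0))\<close> is attained at \<open>g\<^sub>0\<close>,
  which closes the duality gap; strong convexity of the primal objective gives uniqueness.

  The last part only uses that \<open>F\<close> is positively homogeneous on a cone. Minimizing along the
  ray through the minimizer \<open>u\<^sup>*\<close> forces \<open>F u\<^sup>* = -\<parallel>u\<^sup>*\<parallel>\<^sup>2\<close>, so the minimal value is
  \<open>-\<parallel>u\<^sup>*\<parallel>\<^sup>2/2\<close>; a point of the unit ball with \<open>F u < -\<parallel>u\<^sup>*\<parallel>\<close> would do better on its own ray.\<close>

lemma norm_vec_power2: "(norm (x::real^'n))^2 = (\<Sum>i\<in>UNIV. (x$i)^2)"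
  by (simp only: power2_norm_eq_inner inner_vec_def) (simp add: power2_eq_square)

lemma pos_part_in_orthant [simp]: "pos_part x \<in> orthant"
  by (simp add: pos_part_def orthant_def)

lemma cone_orthant: "cone orthant"
  by (simp add: cone_def orthant_def)

lemma inner_half_norm_ge_pos_part:
  fixes u g :: "real^'n"
  assumes u: "u \<in> orthant"
  shows "inner u g + 1/2 * (norm u)^2
           \<ge> - 1/2 * (norm (pos_part (-g)))^2 + 1/2 * (norm (u - pos_part (-g)))^2"
proof -
  have "- 1/2 * (max (-g$i) 0)^2 + 1/2 * (u$i - max (-g$i) 0)^2 \<le> u$i * g$i + 1/2 * (u$i)^2" for i
  proof -
    have "u$i * g$i + 1/2 * (u$i)^2 - (- 1/2 * (max (-g$i) 0)^2 + 1/2 * (u$i - max (-g$i) 0)^2)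
        = u$i * max (g$i) 0"
      by (simp add: max_def power2_eq_square algebra_simps)
    moreover have "0 \<le> u$i * max (g$i) 0"
      using u by (simp add: orthant_def)
    ultimately show ?thesis by linarith
  qed
  then have "(\<Sum>i\<in>UNIV. - 1/2 * (max (-g$i) 0)^2 + 1/2 * (u$i - max (-g$i) 0)^2)
      \<le> (\<Sum>i\<in>UNIV. u$i * g$i + 1/2 * (u$i)^2)"
    by (rule sum_mono)
  moreover have "- 1/2 * (norm (pos_part (-g)))^2 + 1/2 * (norm (u - pos_part (-g)))^2
      = (\<Sum>i\<in>UNIV. - 1/2 * (max (-g$i) 0)^2 + 1/2 * (u$i - max (-g$i) 0)^2)"
    by (subst sum.distrib) (simp add: norm_vec_power2 pos_part_def sum_distrib_left)
  moreover have "inner u g + 1/2 * (norm u)^2 = (\<Sum>i\<in>UNIV. u$i * g$i + 1/2 * (u$i)^2)"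
    by (subst sum.distrib) (simp add: norm_vec_power2 inner_vec_def sum_distrib_left)
  ultimately show ?thesis by simp
qed

lemma inner_half_norm_pos_part:
  fixes g :: "real^'n"
  shows "inner (pos_part (-g)) g + 1/2 * (norm (pos_part (-g)))^2 = - 1/2 * (norm (pos_part (-g)))^2"
proof -
  have componentwise: "max (-g$i) 0 * g$i + 1/2 * (max (-g$i) 0)^2 = - 1/2 * (max (-g$i) 0)^2" for i
    by (simp add: max_def power2_eq_square)
  have "(\<Sum>i\<in>UNIV. max (-g$i) 0 * g$i + 1/2 * (max (-g$i) 0)^2)
      = (\<Sum>i\<in>UNIV. - 1/2 * (max (-g$i) 0)^2)"
    by (rule sum.cong[OF refl]) (rule componentwise)
  then show ?thesis
    by (simp add: sum.distrib norm_vec_power2 inner_vec_def pos_part_def sum_distrib_left)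
qed

lemma neg_part_add_power2_le:
  fixes x d :: real
  shows "(max (-(x+d)) 0)^2 \<le> (max (-x) 0)^2 - 2 * max (-x) 0 * d + d^2"
proof (cases "x \<le> 0")
  case True
  have "(max (-(x+d)) 0)^2 \<le> \<bar>x+d\<bar>^2" by (rule power_mono) auto
  also have "\<dots> = (max (-x) 0)^2 - 2 * max (-x) 0 * d + d^2"
    using True by (simp add: max_def power2_eq_square algebra_simps)
  finally show ?thesis .
next
  case False
  have "(max (-(x+d)) 0)^2 \<le> \<bar>d\<bar>^2" by (rule power_mono) (use False in auto)
  then show ?thesis using False by (simp add: max_def)
qed

lemma norm_pos_part_shift_le:
  fixes g d :: "real^'n"
  shows "(norm (pos_part (-(g + t *\<^sub>R d))))^2
           \<le> (norm (pos_part (-g)))^2 - 2 * t * inner (pos_part (-g)) d + t^2 * (norm d)^2"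
proof -
  have "(\<Sum>i\<in>UNIV. (max (-(g$i + t * d$i)) 0)^2)
      \<le> (\<Sum>i\<in>UNIV. (max (-(g$i)) 0)^2 - 2 * max (-(g$i)) 0 * (t * d$i) + (t * d$i)^2)"
    by (rule sum_mono) (rule neg_part_add_power2_le)
  then show ?thesis
    by (simp add: norm_vec_power2 inner_vec_def pos_part_def sum_subtractf sum.distrib
        sum_distrib_left power_mult_distrib algebra_simps)
qed

lemma norm_pos_part_min_variational:
  fixes g0 g :: "real^'n"
  assumes K: "convex K" and g0: "g0 \<in> K" and g: "g \<in> K"
    and min: "\<And>g. g \<in> K \<Longrightarrow> norm (pos_part (-g0)) \<le> norm (pos_part (-g))"
  shows "inner (pos_part (-g0)) (g - g0) \<le> 0"
proof (rule ccontr)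
  define a where "a = inner (pos_part (-g0)) (g - g0)"
  define b where "b = (norm (g - g0))^2"
  assume "\<not> inner (pos_part (-g0)) (g - g0) \<le> 0"
  then have a: "a > 0" by (simp add: a_def)
  have "2 * a \<le> t * b" if t: "0 < t" "t \<le> 1" for t
  proof -
    have "g0 + t *\<^sub>R (g - g0) = (1 - t) *\<^sub>R g0 + t *\<^sub>R g"
      by (simp add: algebra_simps)
    then have "g0 + t *\<^sub>R (g - g0) \<in> K"
      using convexD_alt[OF K g0 g] t by simp
    then have "norm (pos_part (-g0)) \<le> norm (pos_part (-(g0 + t *\<^sub>R (g - g0))))"
      by (rule min)
    then have "(norm (pos_part (-g0)))^2 \<le> (norm (pos_part (-(g0 + t *\<^sub>R (g - g0)))))^2"
      by (rule power_mono) simp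
    also have "\<dots> \<le> (norm (pos_part (-g0)))^2 - 2 * t * a + t^2 * b"
      unfolding a_def b_def by (rule norm_pos_part_shift_le)
    finally have "t * (2 * a) \<le> t * (t * b)" by (simp add: power2_eq_square algebra_simps)
    then show ?thesis using t by simp
  qed
  moreover have b: "b > 0"
    using a by (auto simp: a_def b_def)
  ultimately have "2 * a \<le> min 1 (a / b) * b"
    using a by (simp add: min_def)
  also have "\<dots> \<le> a"
    using b by (simp add: min_def field_simps)
  finally show False using a by simp
qed

lemma homogeneous_prox_ray_bound:
  fixes f :: "'a::real_inner \<Rightarrow> real"
  assumes cone: "cone K" and homog: "\<forall>t\<ge>0. \<forall>u\<in>K. f (t *\<^sub>R u) = t * f u"
    and min: "\<forall>u\<in>K. f us + 1/2 * (norm us)^2 \<le> f u + 1/2 * (norm u)^2"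
    and u: "u \<in> K" and neg: "f u < 0"
  shows "u \<noteq> 0" and "f us + 1/2 * (norm us)^2 \<le> - ((f u)^2) / (2 * (norm u)^2)"
proof -
  show u0: "u \<noteq> 0"
    using homog u neg by force
  define t where "t = - f u / (norm u)^2"
  have t: "0 \<le> t"
    using neg by (simp add: t_def divide_nonpos_nonneg)
  then have "t *\<^sub>R u \<in> K"
    using cone u by (simp add: cone_def)
  with min have "f us + 1/2 * (norm us)^2 \<le> f (t *\<^sub>R u) + 1/2 * (norm (t *\<^sub>R u))^2"
    by blast
  also have "\<dots> = t * f u + 1/2 * t^2 * (norm u)^2"
    using homog t u by (simp add: power_mult_distrib)
  also have "\<dots> = - ((f u)^2) / (2 * (norm u)^2)"
    using u0 by (simp add: t_def field_simps power2_eq_square)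
  finally show "f us + 1/2 * (norm us)^2 \<le> - ((f u)^2) / (2 * (norm u)^2)" .
qed

lemma homogeneous_prox_minimizer_normalized:
  fixes f :: "'a::real_inner \<Rightarrow> real"
  assumes cone: "cone K" and homog: "\<forall>t\<ge>0. \<forall>u\<in>K. f (t *\<^sub>R u) = t * f u"
    and us: "us \<in> K" and min: "\<forall>u\<in>K. f us + 1/2 * (norm us)^2 \<le> f u + 1/2 * (norm u)^2"
    and u: "u \<in> K" and u1: "norm u \<le> 1"
  shows "us \<noteq> 0 \<Longrightarrow> f ((1 / norm us) *\<^sub>R us) \<le> f u"
    and "us = 0 \<Longrightarrow> f 0 \<le> f u"
proof -
  have f0: "f 0 = 0"
    using homog us by force
  note ray = homogeneous_prox_ray_bound[OF cone homog min]
  show "f 0 \<le> f u" if "us = 0"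
  proof (rule ccontr)
    assume "\<not> f 0 \<le> f u"
    then have neg: "f u < 0" by (simp add: f0)
    have "0 < (f u)^2 / (2 * (norm u)^2)"
      using neg ray(1)[OF u neg] by simp
    with ray(2)[OF u neg] that f0 show False by simp
  qed
  show "f ((1 / norm us) *\<^sub>R us) \<le> f u" if us0: "us \<noteq> 0"
  proof -
    define n where "n = norm us"
    have n: "0 < n"
      using us0 by (simp add: n_def)
    have "0 \<in> K"
      using cone us by (metis cone_def scale_zero_left order_refl)
    with min f0 have "f us + n^2/2 \<le> 0"
      by (auto simp: n_def)
    moreover have "0 < n^2"
      using n by simp
    ultimately have neg: "f us < 0"
      by linarith
    have "f us + n^2/2 \<le> - ((f us)^2) / (2 * n^2)"
      using ray(2)[OF us neg] by (simp add: n_def)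
    then have "(f us + n^2)^2 \<le> 0"
      using n by (simp add: field_simps power2_eq_square)
    then have fus: "f us = - (n^2)"
      by simp
    have lhs: "f ((1 / n) *\<^sub>R us) = - n"
      using homog us n fus by (simp add: power2_eq_square)
    show ?thesis
    proof (rule ccontr)
      assume "\<not> ?thesis"
      then have "f u < - n"
        using lhs by (simp add: n_def)
      then have neg: "f u < 0" and "n^2 < (f u)^2"
        using n by (auto intro: power_strict_mono[of n "- f u" 2, simplified])
      have "0 < (norm u)^2" "(norm u)^2 \<le> 1"
        using ray(1)[OF u neg] u1 by (auto simp: power_le_one)
      then have "(f u)^2 / 2 \<le> (f u)^2 / (2 * (norm u)^2)"
        by (intro frac_le) auto
      with ray(2)[OF u neg] fus \<open>n^2 < (f u)^2\<close> show False
        by (simp add: n_def)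
    qed
  qed
qed

definition support_vec ::
    "real \<Rightarrow> real \<Rightarrow> real^'m^'m \<Rightarrow> real^'m \<Rightarrow> real^'m^'m \<Rightarrow> real^'m \<Rightarrow> real^'m" where
  "support_vec lam \<sigma> W c \<alpha> v = c + (lam/2) *\<^sub>R Aop W \<alpha> + \<sigma> *\<^sub>R v"

definition support_set :: "real \<Rightarrow> real \<Rightarrow> real^'m^'m \<Rightarrow> real^'m \<Rightarrow> (real^'m) set" where
  "support_set lam \<sigma> W c = (\<lambda>(\<alpha>, v). support_vec lam \<sigma> W c \<alpha> v) ` (dual_feasible \<times> simplex_set)"

lemma dual_point_eq: "dual_point lam \<sigma> W c \<alpha> v = pos_part (- support_vec lam \<sigma> W c \<alpha> v)"
  unfolding dual_point_def support_vec_def by (simp add: algebra_simps)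

lemma dual_obj_eq: "dual_obj lam \<sigma> W c \<alpha> v = 1/2 * (norm (pos_part (- support_vec lam \<sigma> W c \<alpha> v)))^2"
  unfolding dual_obj_def dual_point_eq ..

lemma linear_Aop: "linear (Aop W)"
proof (rule linearI)
  show "Aop W (a + b) = Aop W a + Aop W b" for a b
    by (simp add: Aop_def vec_eq_iff algebra_simps flip: sum.distrib)
  show "Aop W (r *\<^sub>R a) = r *\<^sub>R Aop W a" for r a
    by (simp add: Aop_def vec_eq_iff sum_distrib_left algebra_simps)
qed

lemma convex_dual_feasible: "convex dual_feasible"
proof (rule convexI)
  fix a b :: "real^'m^'m" and s t :: real
  assume a: "a \<in> dual_feasible" and b: "b \<in> dual_feasible" and st: "0 \<le> s" "0 \<le> t" "s + t = 1"
  have bound: "\<bar>(s *\<^sub>R a + t *\<^sub>R b)$i$j\<bar> \<le> 1" for i j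
  proof -
    have "\<bar>s * a$i$j + t * b$i$j\<bar> \<le> s * \<bar>a$i$j\<bar> + t * \<bar>b$i$j\<bar>"
      using st by (metis abs_mult abs_of_nonneg abs_triangle_ineq)
    also have "\<dots> \<le> s * 1 + t * 1"
    proof -
      have "\<bar>a$i$j\<bar> \<le> 1" "\<bar>b$i$j\<bar> \<le> 1"
        using a b unfolding dual_feasible_def by blast+
      then show ?thesis using st by (intro add_mono mult_left_mono) auto
    qed
    finally show ?thesis using st by simp
  qed
  have antisym: "(s *\<^sub>R a + t *\<^sub>R b)$i$j = - (s *\<^sub>R a + t *\<^sub>R b)$j$i" for i j
  proof -
    have "a$i$j = - a$j$i" "b$i$j = - b$j$i"
      using a b unfolding dual_feasible_def by blast+
    then show ?thesis by simp
  qed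
  show "s *\<^sub>R a + t *\<^sub>R b \<in> dual_feasible"
    unfolding dual_feasible_def using bound antisym by blast
qed

lemma convex_simplex_set: "convex simplex_set"
proof (rule convexI)
  fix a b :: "real^'m" and s t :: real
  assume a: "a \<in> simplex_set" and b: "b \<in> simplex_set" and st: "0 \<le> s" "0 \<le> t" "s + t = 1"
  have "(\<Sum>i\<in>UNIV. s * a$i + t * b$i) = s * (\<Sum>i\<in>UNIV. a$i) + t * (\<Sum>i\<in>UNIV. b$i)"
    by (simp add: sum.distrib sum_distrib_left)
  then show "s *\<^sub>R a + t *\<^sub>R b \<in> simplex_set"
    using a b st by (simp add: simplex_set_def)
qed

lemma convex_support_set: "convex (support_set lam \<sigma> W c)"
proof -
  have "linear (\<lambda>p. (lam/2) *\<^sub>R Aop W (fst p) + \<sigma> *\<^sub>R snd p)"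
  proof (rule linearI)
    show "(lam/2) *\<^sub>R Aop W (fst (p + q)) + \<sigma> *\<^sub>R snd (p + q)
        = ((lam/2) *\<^sub>R Aop W (fst p) + \<sigma> *\<^sub>R snd p) + ((lam/2) *\<^sub>R Aop W (fst q) + \<sigma> *\<^sub>R snd q)" for p q
      by (simp add: linear_add[OF linear_Aop] scaleR_add_right)
    show "(lam/2) *\<^sub>R Aop W (fst (r *\<^sub>R p)) + \<sigma> *\<^sub>R snd (r *\<^sub>R p)
        = r *\<^sub>R ((lam/2) *\<^sub>R Aop W (fst p) + \<sigma> *\<^sub>R snd p)" for r p
      by (simp add: linear_scale[OF linear_Aop] scaleR_add_right mult.commute)
  qed
  then have "convex ((+) c ` (\<lambda>p. (lam/2) *\<^sub>R Aop W (fst p) + \<sigma> *\<^sub>R snd p) ` (dual_feasible \<times> simplex_set))"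
    by (intro convex_translation convex_linear_image[OF _ convex_Times[OF convex_dual_feasible convex_simplex_set]])
  also have "(+) c ` (\<lambda>p. (lam/2) *\<^sub>R Aop W (fst p) + \<sigma> *\<^sub>R snd p) ` (dual_feasible \<times> simplex_set)
      = support_set lam \<sigma> W c"
    unfolding support_set_def support_vec_def image_image by (rule image_cong) (auto simp: add.assoc)
  finally show ?thesis .
qed

lemma compact_dual_feasible: "compact (dual_feasible :: (real^'m^'m) set)"
proof -
  have "closed (dual_feasible :: (real^'m^'m) set)"
    unfolding dual_feasible_def
    by (intro closed_Collect_all closed_Collect_conj closed_Collect_le closed_Collect_eq continuous_intros)
  moreover have "norm \<alpha> \<le> real (CARD('m) * CARD('m))" if "\<alpha> \<in> dual_feasible" for \<alpha> :: "real^'m^'m"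
  proof -
    have "norm \<alpha> \<le> (\<Sum>i\<in>UNIV. norm (\<alpha>$i))"
      unfolding norm_vec_def by (rule L2_set_le_sum) auto
    also have "\<dots> \<le> (\<Sum>i\<in>UNIV. \<Sum>j\<in>UNIV. \<bar>\<alpha>$i$j\<bar>)"
      by (intro sum_mono norm_le_l1_cart)
    also have "\<dots> \<le> (\<Sum>i\<in>(UNIV::'m set). \<Sum>j\<in>(UNIV::'m set). 1)"
      using that unfolding dual_feasible_def by (intro sum_mono) blast
    finally show ?thesis by simp
  qed
  ultimately show ?thesis
    unfolding compact_eq_bounded_closed bounded_iff by blast
qed

lemma compact_simplex_set: "compact (simplex_set :: (real^'m) set)"
proof -
  have "closed (simplex_set :: (real^'m) set)"
    unfolding simplex_set_def
    by (intro closed_Collect_all closed_Collect_conj closed_Collect_le closed_Collect_eq continuous_intros)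
  moreover have "norm v \<le> 1" if "v \<in> simplex_set" for v :: "real^'m"
  proof -
    have "norm v \<le> (\<Sum>i\<in>UNIV. \<bar>v$i\<bar>)" by (rule norm_le_l1_cart)
    also have "\<dots> = 1" using that by (simp add: simplex_set_def)
    finally show ?thesis .
  qed
  ultimately show ?thesis
    unfolding compact_eq_bounded_closed bounded_iff by blast
qed

lemma dual_minimizer_exists:
  "\<exists>\<alpha>\<in>dual_feasible. \<exists>v\<in>simplex_set. \<forall>\<alpha>'\<in>dual_feasible. \<forall>v'\<in>simplex_set.
     dual_obj lam \<sigma> W c \<alpha> v \<le> dual_obj lam \<sigma> W c \<alpha>' v'"
proof -
  let ?D = "\<lambda>p. dual_obj lam \<sigma> W c (fst p) (snd p)"
  have "(0, \<chi> i. if i = undefined then 1 else 0) \<in> dual_feasible \<times> (simplex_set :: (real^'m) set)"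
    by (auto simp: dual_feasible_def simplex_set_def)
  moreover have "continuous_on UNIV ?D"
    unfolding dual_obj_eq support_vec_def pos_part_def Aop_def by (intro continuous_intros)
  ultimately have "\<exists>p\<in>dual_feasible \<times> simplex_set. \<forall>q\<in>dual_feasible \<times> simplex_set. ?D p \<le> ?D q"
    by (intro continuous_attains_inf compact_Times compact_dual_feasible compact_simplex_set)
      (auto elim: continuous_on_subset)
  then show ?thesis by fastforce
qed

lemma Fobj_scaleR:
  assumes "0 \<le> t"
  shows "Fobj lam \<sigma> W c (t *\<^sub>R u) = t * Fobj lam \<sigma> W c u"
proof -
  have "range (\<lambda>i. (t *\<^sub>R u)$i) = (\<lambda>x. t * x) ` range (\<lambda>i. u$i)"
    by auto
  moreover have "mono (\<lambda>x::real. t * x)"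
    using assms by (auto intro: monoI mult_left_mono)
  ultimately have max: "Max (range (\<lambda>i. (t *\<^sub>R u)$i)) = t * Max (range (\<lambda>i. u$i))"
    using mono_Max_commute[of "\<lambda>x. t * x" "range (\<lambda>i. u$i)"] by auto
  have "\<bar>t * u$i - t * u$j\<bar> = t * \<bar>u$i - u$j\<bar>" for i j
    using assms by (simp add: right_diff_distrib[symmetric] abs_mult)
  then have "(\<Sum>i\<in>UNIV. \<Sum>j\<in>UNIV. W$i$j * \<bar>(t *\<^sub>R u)$i - (t *\<^sub>R u)$j\<bar>)
      = t * (\<Sum>i\<in>UNIV. \<Sum>j\<in>UNIV. W$i$j * \<bar>u$i - u$j\<bar>)"
    by (simp add: sum_distrib_left mult.left_commute)
  then show ?thesis
    unfolding Fobj_def max by (simp add: distrib_left mult.left_commute)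
qed

lemma inner_Aop:
  assumes symW: "\<forall>i j. W$i$j = W$j$i"
  shows "inner u (Aop W \<alpha>) = (\<Sum>i\<in>UNIV. \<Sum>j\<in>UNIV. W$i$j * \<alpha>$i$j * (u$i - u$j))"
proof -
  have "(\<Sum>i\<in>UNIV. \<Sum>j\<in>UNIV. u$i * W$i$j * \<alpha>$j$i) = (\<Sum>j\<in>UNIV. \<Sum>i\<in>UNIV. u$i * W$i$j * \<alpha>$j$i)"
    by (rule sum.swap)
  also have "\<dots> = (\<Sum>i\<in>UNIV. \<Sum>j\<in>UNIV. u$j * W$i$j * \<alpha>$i$j)"
    using symW by simp
  finally have swap: "(\<Sum>i\<in>UNIV. \<Sum>j\<in>UNIV. u$i * W$i$j * \<alpha>$j$i) = (\<Sum>i\<in>UNIV. \<Sum>j\<in>UNIV. u$j * W$i$j * \<alpha>$i$j)" .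
  have "inner u (Aop W \<alpha>)
      = (\<Sum>i\<in>UNIV. \<Sum>j\<in>UNIV. u$i * W$i$j * \<alpha>$i$j) - (\<Sum>i\<in>UNIV. \<Sum>j\<in>UNIV. u$i * W$i$j * \<alpha>$j$i)"
    by (simp add: inner_vec_def Aop_def sum_distrib_left sum_subtractf algebra_simps)
  then show ?thesis
    unfolding swap by (simp add: sum_subtractf[symmetric] algebra_simps)
qed

lemma inner_support_vec_le_Fobj:
  assumes symW: "\<forall>i j. W$i$j = W$j$i" and nonnegW: "\<forall>i j. 0 \<le> W$i$j"
    and lam: "0 \<le> lam" and sig: "0 \<le> \<sigma>"
    and \<alpha>: "\<alpha> \<in> dual_feasible" and v: "v \<in> simplex_set"
  shows "inner u (support_vec lam \<sigma> W c \<alpha> v) \<le> Fobj lam \<sigma> W c u"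
proof -
  have "W$i$j * \<alpha>$i$j * (u$i - u$j) \<le> W$i$j * \<bar>u$i - u$j\<bar>" for i j
  proof -
    have "\<bar>\<alpha>$i$j\<bar> \<le> 1"
      using \<alpha> unfolding dual_feasible_def by blast
    then have "\<bar>\<alpha>$i$j * (u$i - u$j)\<bar> \<le> \<bar>u$i - u$j\<bar>"
      unfolding abs_mult by (simp add: mult_left_le_one_le)
    then have "\<alpha>$i$j * (u$i - u$j) \<le> \<bar>u$i - u$j\<bar>"
      by simp
    then show ?thesis
      using nonnegW by (simp add: mult.assoc mult_left_mono)
  qed
  then have "inner u (Aop W \<alpha>) \<le> (\<Sum>i\<in>UNIV. \<Sum>j\<in>UNIV. W$i$j * \<bar>u$i - u$j\<bar>)"
    unfolding inner_Aop[OF symW] by (intro sum_mono)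
  then have Aop_le: "lam/2 * inner u (Aop W \<alpha>) \<le> lam/2 * (\<Sum>i\<in>UNIV. \<Sum>j\<in>UNIV. W$i$j * \<bar>u$i - u$j\<bar>)"
    using lam by (intro mult_left_mono) auto
  have "inner u v = (\<Sum>i\<in>UNIV. u$i * v$i)"
    by (simp add: inner_vec_def)
  also have "\<dots> \<le> (\<Sum>i\<in>UNIV. Max (range (\<lambda>i. u$i)) * v$i)"
    using v by (intro sum_mono mult_right_mono Max_ge) (auto simp: simplex_set_def)
  also have "\<dots> = Max (range (\<lambda>i. u$i))"
    using v by (simp add: simplex_set_def flip: sum_distrib_left)
  finally have "\<sigma> * inner u v \<le> \<sigma> * Max (range (\<lambda>i. u$i))"
    using sig by (intro mult_left_mono)
  with Aop_le show ?thesis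
    unfolding support_vec_def Fobj_def by (simp add: inner_add_right)
qed

lemma Fobj_eq_inner_support_vec:
  fixes u :: "real^'m"
  assumes symW: "\<forall>i j. W$i$j = W$j$i"
  shows "\<exists>\<alpha>\<in>dual_feasible. \<exists>v\<in>simplex_set. inner u (support_vec lam \<sigma> W c \<alpha> v) = Fobj lam \<sigma> W c u"
proof -
  define \<alpha> :: "real^'m^'m" where "\<alpha> = (\<chi> i j. sgn (u$i - u$j))"
  have \<alpha>: "\<alpha> \<in> dual_feasible"
    unfolding dual_feasible_def \<alpha>_def by (auto simp: sgn_if)
  have "Max (range (\<lambda>i. u$i)) \<in> range (\<lambda>i. u$i)"
    by (rule Max_in) auto
  then obtain k where k: "u$k = Max (range (\<lambda>i. u$i))"
    by (metis rangeE)
  define v :: "real^'m" where "v = (\<chi> i. if i = k then 1 else 0)"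
  have v: "v \<in> simplex_set"
    unfolding simplex_set_def v_def by simp
  have sgn_times_self: "sgn x * x = \<bar>x\<bar>" for x :: real
    by (simp add: sgn_if)
  have "inner u (Aop W \<alpha>) = (\<Sum>i\<in>UNIV. \<Sum>j\<in>UNIV. W$i$j * \<bar>u$i - u$j\<bar>)"
    unfolding inner_Aop[OF symW] \<alpha>_def by (simp add: mult.assoc sgn_times_self)
  moreover have "inner u v = u$k"
    by (simp add: inner_vec_def v_def if_distrib cong: if_cong)
  ultimately have "inner u (support_vec lam \<sigma> W c \<alpha> v) = Fobj lam \<sigma> W c u"
    unfolding support_vec_def Fobj_def k by (simp add: inner_add_right)
  with \<alpha> v show ?thesis by blast
qed

context
  fixes W :: "real^'m^'m" and c :: "real^'m" and lam \<sigma> :: real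
  assumes symW: "\<forall>i j. W$i$j = W$j$i" and nonnegW: "\<forall>i j. 0 \<le> W$i$j"
    and lam: "0 \<le> lam" and sig: "0 \<le> \<sigma>"
begin

lemma weak_duality:
  assumes "\<alpha> \<in> dual_feasible" "v \<in> simplex_set" "u \<in> orthant"
  shows "- dual_obj lam \<sigma> W c \<alpha> v + 1/2 * (norm (u - dual_point lam \<sigma> W c \<alpha> v))^2
           \<le> primal_obj lam \<sigma> W c u"
  using inner_support_vec_le_Fobj[OF symW nonnegW lam sig assms(1,2), of u c]
    inner_half_norm_ge_pos_part[OF assms(3), of "support_vec lam \<sigma> W c \<alpha> v"]
  unfolding primal_obj_def dual_obj_eq dual_point_eq by linarith

lemma dual_minimizer_primal_value:
  assumes \<alpha>0: "\<alpha>0 \<in> dual_feasible" and v0: "v0 \<in> simplex_set"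
    and opt: "\<forall>\<alpha>\<in>dual_feasible. \<forall>v\<in>simplex_set. dual_obj lam \<sigma> W c \<alpha>0 v0 \<le> dual_obj lam \<sigma> W c \<alpha> v"
  shows "primal_obj lam \<sigma> W c (dual_point lam \<sigma> W c \<alpha>0 v0) = - dual_obj lam \<sigma> W c \<alpha>0 v0"
proof -
  define g0 where "g0 = support_vec lam \<sigma> W c \<alpha>0 v0"
  define us where "us = pos_part (-g0)"
  have g0: "g0 \<in> support_set lam \<sigma> W c"
    using \<alpha>0 v0 by (auto simp: support_set_def g0_def)
  have "norm us \<le> norm (pos_part (-g))" if "g \<in> support_set lam \<sigma> W c" for g
  proof -
    from that obtain \<alpha> v where "\<alpha> \<in> dual_feasible" "v \<in> simplex_set" "g = support_vec lam \<sigma> W c \<alpha> v"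
      by (auto simp: support_set_def)
    with opt have "(norm us)^2 \<le> (norm (pos_part (-g)))^2"
      by (auto simp: dual_obj_eq us_def g0_def)
    then show ?thesis by (rule power2_le_imp_le) simp
  qed
  then have first_order: "inner us (g - g0) \<le> 0" if "g \<in> support_set lam \<sigma> W c" for g
    unfolding us_def using norm_pos_part_min_variational[OF convex_support_set g0 that] by blast
  obtain \<alpha>1 v1 where "\<alpha>1 \<in> dual_feasible" "v1 \<in> simplex_set"
    and "inner us (support_vec lam \<sigma> W c \<alpha>1 v1) = Fobj lam \<sigma> W c us"
    using Fobj_eq_inner_support_vec[OF symW] by blast
  then have "Fobj lam \<sigma> W c us \<le> inner us g0"
    using first_order[of "support_vec lam \<sigma> W c \<alpha>1 v1"]
    by (auto simp: support_set_def inner_diff_right)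
  moreover have "inner us g0 \<le> Fobj lam \<sigma> W c us"
    unfolding g0_def by (rule inner_support_vec_le_Fobj[OF symW nonnegW lam sig \<alpha>0 v0])
  ultimately show ?thesis
    using inner_half_norm_pos_part[of g0]
    unfolding primal_obj_def dual_obj_eq dual_point_eq g0_def[symmetric] us_def[symmetric] by simp
qed

lemma dual_minimizer_primal_minimizer:
  assumes \<alpha>0: "\<alpha>0 \<in> dual_feasible" and v0: "v0 \<in> simplex_set"
    and opt: "\<forall>\<alpha>\<in>dual_feasible. \<forall>v\<in>simplex_set. dual_obj lam \<sigma> W c \<alpha>0 v0 \<le> dual_obj lam \<sigma> W c \<alpha> v"
  defines "us \<equiv> dual_point lam \<sigma> W c \<alpha>0 v0"
  shows "us \<in> orthant"
    and "\<forall>u\<in>orthant. primal_obj lam \<sigma> W c us \<le> primal_obj lam \<sigma> W c u"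
    and "\<forall>u\<in>orthant. (\<forall>u'\<in>orthant. primal_obj lam \<sigma> W c u \<le> primal_obj lam \<sigma> W c u') \<longrightarrow> u = us"
proof -
  show us: "us \<in> orthant"
    by (simp add: us_def dual_point_eq)
  have growth: "primal_obj lam \<sigma> W c us + 1/2 * (norm (u - us))^2 \<le> primal_obj lam \<sigma> W c u"
    if "u \<in> orthant" for u :: "real^'m"
    using weak_duality[OF \<alpha>0 v0 that] dual_minimizer_primal_value[OF \<alpha>0 v0 opt]
    unfolding us_def by linarith
  show "\<forall>u\<in>orthant. primal_obj lam \<sigma> W c us \<le> primal_obj lam \<sigma> W c u"
  proof
    fix u :: "real^'m" assume "u \<in> orthant"
    then have "primal_obj lam \<sigma> W c us + 1/2 * (norm (u - us))^2 \<le> primal_obj lam \<sigma> W c u"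
      by (rule growth)
    moreover have "0 \<le> 1/2 * (norm (u - us))^2"
      by simp
    ultimately show "primal_obj lam \<sigma> W c us \<le> primal_obj lam \<sigma> W c u"
      by linarith
  qed
  show "\<forall>u\<in>orthant. (\<forall>u'\<in>orthant. primal_obj lam \<sigma> W c u \<le> primal_obj lam \<sigma> W c u') \<longrightarrow> u = us"
  proof (intro ballI impI)
    fix u :: "real^'m" assume u: "u \<in> orthant" and "\<forall>u'\<in>orthant. primal_obj lam \<sigma> W c u \<le> primal_obj lam \<sigma> W c u'"
    then have "primal_obj lam \<sigma> W c u \<le> primal_obj lam \<sigma> W c us"
      using us by blast
    with growth[OF u] have "(norm (u - us))^2 \<le> 0"
      by linarith
    then show "u = us" by simp
  qed
qed

end

lemma primal_minimizer_normalized: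
  assumes us: "us \<in> orthant"
    and min: "\<forall>u\<in>orthant. primal_obj lam \<sigma> W c us \<le> primal_obj lam \<sigma> W c u"
  shows "(us \<noteq> 0 \<longrightarrow> (\<forall>u\<in>orthant. norm u \<le> 1 \<longrightarrow>
            Fobj lam \<sigma> W c ((1 / norm us) *\<^sub>R us) \<le> Fobj lam \<sigma> W c u))
       \<and> (us = 0 \<longrightarrow> (\<forall>u\<in>orthant. norm u \<le> 1 \<longrightarrow> Fobj lam \<sigma> W c 0 \<le> Fobj lam \<sigma> W c u))"
proof -
  have "\<forall>t\<ge>0. \<forall>u\<in>orthant. Fobj lam \<sigma> W c (t *\<^sub>R u) = t * Fobj lam \<sigma> W c u"
    by (simp add: Fobj_scaleR)
  moreover have "\<forall>u\<in>orthant. Fobj lam \<sigma> W c us + 1/2 * (norm us)^2 \<le> Fobj lam \<sigma> W c u + 1/2 * (norm u)^2"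
    using min by (simp add: primal_obj_def)
  ultimately show ?thesis
    using homogeneous_prox_minimizer_normalized[OF cone_orthant _ us] by blast
qed

theorem mainTheorem6:
  fixes W :: "real^'m^'m" and c :: "real^'m" and lam \<sigma> :: real
  assumes symW: "\<forall>i j. W$i$j = W$j$i"
    and nonnegW: "\<forall>i j. 0 \<le> W$i$j"
    and lam: "0 \<le> lam" and sig: "0 \<le> \<sigma>"
  shows
    "(\<exists>u\<in>orthant. \<forall>u'\<in>orthant. primal_obj lam \<sigma> W c u \<le> primal_obj lam \<sigma> W c u')
   \<and> (\<exists>\<alpha>\<in>dual_feasible. \<exists>v\<in>simplex_set. \<forall>\<alpha>'\<in>dual_feasible. \<forall>v'\<in>simplex_set.
          dual_obj lam \<sigma> W c \<alpha> v \<le> dual_obj lam \<sigma> W c \<alpha>' v')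
   \<and> (INF u\<in>orthant. primal_obj lam \<sigma> W c u)
       = - (INF p\<in>dual_feasible \<times> simplex_set. dual_obj lam \<sigma> W c (fst p) (snd p))
   \<and> (\<forall>\<alpha>\<in>dual_feasible. \<forall>v\<in>simplex_set.
        (\<forall>\<alpha>'\<in>dual_feasible. \<forall>v'\<in>simplex_set. dual_obj lam \<sigma> W c \<alpha> v \<le> dual_obj lam \<sigma> W c \<alpha>' v') \<longrightarrow>
        (let ustar = dual_point lam \<sigma> W c \<alpha> v in
           ustar \<in> orthant
         \<and> (\<forall>u\<in>orthant. primal_obj lam \<sigma> W c ustar \<le> primal_obj lam \<sigma> W c u)
         \<and> (\<forall>u\<in>orthant. (\<forall>u'\<in>orthant. primal_obj lam \<sigma> W c u \<le> primal_obj lam \<sigma> W c u') \<longrightarrow> u = ustar)))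
   \<and> (\<forall>ustar\<in>orthant. (\<forall>u\<in>orthant. primal_obj lam \<sigma> W c ustar \<le> primal_obj lam \<sigma> W c u) \<longrightarrow>
        (ustar \<noteq> 0 \<longrightarrow>
           (\<forall>u\<in>orthant. norm u \<le> 1 \<longrightarrow>
              Fobj lam \<sigma> W c ((1 / norm ustar) *\<^sub>R ustar) \<le> Fobj lam \<sigma> W c u))
      \<and> (ustar = 0 \<longrightarrow>
           (\<forall>u\<in>orthant. norm u \<le> 1 \<longrightarrow> Fobj lam \<sigma> W c 0 \<le> Fobj lam \<sigma> W c u)))"
proof -
  obtain \<alpha>0 v0 where \<alpha>0: "\<alpha>0 \<in> dual_feasible" and v0: "v0 \<in> simplex_set"
    and opt: "\<forall>\<alpha>\<in>dual_feasible. \<forall>v\<in>simplex_set. dual_obj lam \<sigma> W c \<alpha>0 v0 \<le> dual_obj lam \<sigma> W c \<alpha> v"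
    using dual_minimizer_exists by blast
  note primal_minimizer = dual_minimizer_primal_minimizer[OF symW nonnegW lam sig]
  have "(INF u\<in>orthant. primal_obj lam \<sigma> W c u) = primal_obj lam \<sigma> W c (dual_point lam \<sigma> W c \<alpha>0 v0)"
    using primal_minimizer(1,2)[OF \<alpha>0 v0 opt] by (intro cInf_eq_minimum) auto
  also have "\<dots> = - dual_obj lam \<sigma> W c \<alpha>0 v0"
    by (rule dual_minimizer_primal_value[OF symW nonnegW lam sig \<alpha>0 v0 opt])
  also have "dual_obj lam \<sigma> W c \<alpha>0 v0 = (INF p\<in>dual_feasible \<times> simplex_set. dual_obj lam \<sigma> W c (fst p) (snd p))"
    using \<alpha>0 v0 opt by (intro cInf_eq_minimum[symmetric]) force+
  finally have strong_duality: "(INF u\<in>orthant. primal_obj lam \<sigma> W c u)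
      = - (INF p\<in>dual_feasible \<times> simplex_set. dual_obj lam \<sigma> W c (fst p) (snd p))" .
  show ?thesis
    unfolding Let_def
    by (intro conjI)
      (use primal_minimizer(1,2)[OF \<alpha>0 v0 opt] in blast,
       use \<alpha>0 v0 opt in blast,
       fact strong_duality,
       use primal_minimizer in blast,
       use primal_minimizer_normalized in blast)
qed

end
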